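(* Consider the autonomous system $\ddot q^{a}=-\Gamma^{a}_{bc}(q)\dot q^{b}\dot q^{c}-Q^{a}(q)$ on a (pseudo-)Riemannian manifold with metric $\gamma_{ab}$. Let $m\ge 3$ and $n\ge 1$ be integers. Suppose we are given: a constant $s$; a smooth function $G(q)$; an $m$th-order Killing tensor $C_{(0)i_1\dots i_m}(q)$; and, for each $k=0,1,\dots,n$ and $r=1,\dots,m-1$, totally symmetric $r$-rank tensor fields $L_{(k)i_1\dots i_r}(q)$, such that: (i) for $k=0,\dots,n-1$, the tensor $L_{(k)(i_1\dots i_{m-1};i_m)}$ is an $m$th-order Killing tensor, and $L_{(n)i_1\dots i_{m-1}}$ is an $(m-1)$th-order Killing tensor; (ii) $L_{(n)i_1}Q^{i_1}=s$; (iii) the following hold: \begin{align*} &L_{(n)(i_1\dots i_{m-2};i_{m-1})}=-\tfrac{m}{n}L_{(n-1)(i_1\dots i_{m-1};i_m)}Q^{i_m},\\ &L_{(k-1)(i_1\dots i_{m-2};i_{m-1})}=-\tfrac{m}{k-1}L_{(k-2)(i_1\dots i_{m-1};i_m)}Q^{i_m}-k\,L_{(k)i_1\dots i_{m-1}},\quad k=2,\dots,n,\\ &L_{(0)(i_1\dots i_{m-2};i_{m-1})}=m\,C_{(0)i_1\dots i_{m-1}i_m}Q^{i_m}-L_{(1)i_1\dots i_{m-1}},\\ &L_{(n)(i_1\dots i_{r-1};i_r)}=(r+1)L_{(n)i_1\dots i_r i_{r+1}}Q^{i_{r+1}},\quad r=2,\dots,m-2,\\ &L_{(k-1)(i_1\dots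 i_{r-1};i_r)}=(r+1)L_{(k-1)i_1\dots i_r i_{r+1}}Q^{i_{r+1}}-k\,L_{(k)i_1\dots i_r},\quad k=1,\dots,n,\ r=2,\dots,m-2,\\ &\big(L_{(n-1)c}Q^{c}\big)_{,i_1}=2n\,L_{(n)i_1i_2}Q^{i_2},\\ &\big(L_{(k-2)c}Q^{c}\big)_{,i_1}=2(k-1)L_{(k-1)i_1i_2}Q^{i_2}-k(k-1)L_{(k)i_1},\quad k=2,\dots,n,\\ &G_{,i_1}=2L_{(0)i_1i_2}Q^{i_2}-L_{(1)i_1}. \end{align*} Then \begin{align*} I^{(m)}_n=&\Big(C_{(0)i_1\dots i_m}-\sum_{k=1}^{n}\frac{t^{k}}{k}L_{(k-1)(i_1\dots i_{m-1};i_m)}\Big)\dot q^{i_1}\cdots\dot q^{i_m}+\sum_{r=1}^{m-1}\sum_{k=0}^{n}t^{k}L_{(k)i_1\dots i_r}\dot q^{i_1}\cdots\dot q^{i_r}\\ &+s\frac{t^{n+1}}{n+1}+\sum_{k=1}^{n}\frac{t^{k}}{k}L_{(k-1)c}Q^{c}+G(q) \end{align*} is a first integral of the system (constant along every solution).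
   Context: Indices are raised and lowered with $\gamma_{ab}$; Einstein summation convention; $\Gamma^a_{bc}$ are the Christoffel symbols of $\gamma_{ab}$; a comma denotes a partial derivative, a semicolon the Levi-Civita covariant derivative of $\gamma_{ab}$, and round brackets around indices denote total symmetrization (normalized). A totally symmetric tensor $K_{i_1\dots i_p}$ is a $p$th-order Killing tensor if $K_{(i_1\dots i_p;i_{p+1})}=0$. When $m=3$ the conditions with $r=2,\dots,m-2$ are vacuous; when $n=1$ the conditions with $k=2,\dots,n$ are vacuous. A first integral is a function of $(t,q,\dot q)$ constant along all solutions. *)

theory Defs
  imports "HOL-Analysis.Analysis" "HOL-Library.Multiset"
begin

text \<open>Everything is expressed in a single coordinate chart: an open set U of real^'n
  (the index type 'n is an arbitrary finite type, i.e. dimension CARD('n)).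
  Covariant tensors of rank r are functions  q \<mapsto> (index list of length r \<mapsto> component).\<close>

type_synonym 'n tensor = "real^'n \<Rightarrow> 'n list \<Rightarrow> real"

definition pd :: "(real^'n \<Rightarrow> real) \<Rightarrow> 'n \<Rightarrow> real^'n \<Rightarrow> real" where
  "pd f i q = frechet_derivative f (at q) (axis i 1)"

fun Ck :: "nat \<Rightarrow> (real^'n) set \<Rightarrow> (real^'n \<Rightarrow> real) \<Rightarrow> bool" where
  "Ck 0 U f = continuous_on U f"
| "Ck (Suc k) U f = ((\<forall>q\<in>U. f differentiable (at q)) \<and> continuous_on U f \<and> (\<forall>i. Ck k U (pd f i)))"

definition smooth_on :: "(real^'n) set \<Rightarrow> (real^'n \<Rightarrow> real) \<Rightarrow> bool" where
  "smooth_on U f = (\<forall>k. Ck k U f)"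

definition smooth_tensor :: "(real^'n) set \<Rightarrow> nat \<Rightarrow> 'n tensor \<Rightarrow> bool" where
  "smooth_tensor U r T = (\<forall>xs. length xs = r \<longrightarrow> smooth_on U (\<lambda>q. T q xs))"

definition sym_tensor :: "(real^'n) set \<Rightarrow> nat \<Rightarrow> 'n tensor \<Rightarrow> bool" where
  "sym_tensor U r T = (\<forall>q\<in>U. \<forall>xs ys. length xs = r \<longrightarrow> mset xs = mset ys \<longrightarrow> T q xs = T q ys)"

definition christ :: "(real^'n \<Rightarrow> real^'n^'n) \<Rightarrow> 'n \<Rightarrow> 'n \<Rightarrow> 'n \<Rightarrow> real^'n \<Rightarrow> real" where
  "christ g a b c q = (1/2) * (\<Sum>d\<in>UNIV. matrix_inv (g q) $ a $ d *
      (pd (\<lambda>p. g p $ d $ b) c q + pd (\<lambda>p. g p $ d $ c) b q - pd (\<lambda>p. g p $ b $ c) d q))"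

text \<open>Covariant derivative: (covd g T) q (xs @ [j]) = T_{xs;j}.\<close>
definition covd :: "(real^'n \<Rightarrow> real^'n^'n) \<Rightarrow> 'n tensor \<Rightarrow> 'n tensor" where
  "covd g T q ys = (let xs = butlast ys; j = last ys in
      pd (\<lambda>p. T p xs) j q
      - (\<Sum>p<length xs. \<Sum>c\<in>UNIV. christ g c j (xs ! p) q * T q (xs[p := c])))"

definition symz :: "'n tensor \<Rightarrow> 'n tensor" where
  "symz T q xs = (\<Sum>\<sigma>\<in>{\<sigma>. \<sigma> permutes {..<length xs}}.
        T q (map (\<lambda>i. xs ! \<sigma> i) [0..<length xs])) / fact (length xs)"

definition killing :: "(real^'n \<Rightarrow> real^'n^'n) \<Rightarrow> (real^'n) set \<Rightarrow> nat \<Rightarrow> 'n tensor \<Rightarrow> bool" where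
  "killing g U p K = (sym_tensor U p K \<and>
      (\<forall>q\<in>U. \<forall>xs. length xs = Suc p \<longrightarrow> symz (covd g K) q xs = 0))"

definition contr :: "'n tensor \<Rightarrow> (real^'n \<Rightarrow> real^'n) \<Rightarrow> real^'n \<Rightarrow> 'n list \<Rightarrow> real" where
  "contr T Q q xs = (\<Sum>c\<in>UNIV. T q (xs @ [c]) * Q q $ c)"

definition vpow :: "'n tensor \<Rightarrow> nat \<Rightarrow> real^'n \<Rightarrow> real^'n \<Rightarrow> real" where
  "vpow T r q v = (\<Sum>xs\<in>{xs. length xs = r}. T q xs * prod_list (map (\<lambda>i. v $ i) xs))"

definition is_solution :: "(real^'n \<Rightarrow> real^'n^'n) \<Rightarrow> (real^'n \<Rightarrow> real^'n) \<Rightarrow> (real^'n) set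
    \<Rightarrow> real set \<Rightarrow> (real \<Rightarrow> real^'n) \<Rightarrow> (real \<Rightarrow> real^'n) \<Rightarrow> bool" where
  "is_solution g Q U J x v = (open J \<and> is_interval J \<and>
     (\<exists>a. \<forall>t\<in>J. x t \<in> U \<and> (x has_vector_derivative v t) (at t) \<and>
          (v has_vector_derivative a t) (at t) \<and>
          (\<forall>i. a t $ i = - (\<Sum>b\<in>UNIV. \<Sum>c\<in>UNIV. christ g i b c (x t) * v t $ b * v t $ c) - Q (x t) $ i)))"

definition first_integral :: "(real^'n \<Rightarrow> real^'n^'n) \<Rightarrow> (real^'n \<Rightarrow> real^'n) \<Rightarrow> (real^'n) set
    \<Rightarrow> (real \<Rightarrow> real^'n \<Rightarrow> real^'n \<Rightarrow> real) \<Rightarrow> bool" where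
  "first_integral g Q U F = (\<forall>J x v. is_solution g Q U J x v \<longrightarrow>
      (\<forall>t1\<in>J. \<forall>t2\<in>J. F t1 (x t1) (v t1) = F t2 (x t2) (v t2)))"

text \<open>The candidate first integral I^(m)_n; L k r is the rank-r tensor L_(k).\<close>
definition Imn :: "(real^'n \<Rightarrow> real^'n^'n) \<Rightarrow> (real^'n \<Rightarrow> real^'n) \<Rightarrow> 'n tensor
    \<Rightarrow> (nat \<Rightarrow> nat \<Rightarrow> 'n tensor) \<Rightarrow> (real^'n \<Rightarrow> real) \<Rightarrow> real \<Rightarrow> nat \<Rightarrow> nat
    \<Rightarrow> real \<Rightarrow> real^'n \<Rightarrow> real^'n \<Rightarrow> real" where
  "Imn g Q C L G s m n t q v =
     vpow (\<lambda>p xs. C p xs - (\<Sum>k=1..n. t ^ k / real k * symz (covd g (L (k - 1) (m - 1))) p xs)) m q v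
     + (\<Sum>r=1..m - 1. \<Sum>k=0..n. t ^ k * vpow (L k r) r q v)
     + s * t ^ (n + 1) / real (n + 1)
     + (\<Sum>k=1..n. t ^ k / real k * contr (L (k - 1) 1) Q q [])
     + G q"

end

(*
  Along a solution of the equations of motion, the time derivative of a symmetric tensor
  contracted with r copies of the velocity, T_{i1..ir} qdot^i1 ... qdot^ir, equals
  T_(i1..ir;i(r+1)) qdot^i1 ... qdot^i(r+1) - r T_{i1..i(r-1)c} Q^c qdot^i1 ... qdot^i(r-1):
  the Christoffel terms of the acceleration cancel those of the covariant derivative.
  Killing tensors only contribute the Q-term. Differentiating I^(m)_n term by term therefore
  gives a polynomial in t whose coefficient of t^k is a sum over the ranks r = 1..m-1.
  The conditions (iii) on the intermediate ranks make this sum telescope, and the surviving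
  boundary terms vanish by the conditions on the top rank m - 1 and on the scalars
  L_(k)c Q^c and G, together with (ii) and the Killing property of L_(n).
*)

theory Submission
  imports Defs
begin

section \<open>Contracting tensors with a vector\<close>

abbreviation vprod :: "real^'n \<Rightarrow> 'n list \<Rightarrow> real" where
  "vprod v xs \<equiv> prod_list (map (\<lambda>i. v $ i) xs)"

lemma vprod_mset_eq: "mset xs = mset ys \<Longrightarrow> vprod v xs = vprod v ys"
  by (metis mset_map prod_mset_prod_list)

lemma vpow_0: "vpow T 0 q v = T q []"
  by (simp add: vpow_def)

lemma vpow_Suc_0: "vpow T (Suc 0) q v = (\<Sum>j\<in>UNIV. T q [j] * v $ j)"
proof -
  have singletons: "{xs::'n list. length xs = Suc 0} = (\<lambda>j. [j]) ` UNIV"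
    by (auto simp: length_Suc_conv)
  show ?thesis
    unfolding vpow_def singletons by (subst sum.reindex) (auto simp: inj_on_def)
qed

lemma sum_lists_length_Suc:
  "(\<Sum>ys\<in>{ys::'n::finite list. length ys = Suc r}. f ys)
     = (\<Sum>xs\<in>{xs. length xs = r}. \<Sum>j\<in>UNIV. f (xs @ [j]))"
proof -
  have "(\<Sum>ys\<in>{ys::'n list. length ys = Suc r}. f ys)
      = (\<Sum>p\<in>{xs. length xs = r} \<times> UNIV. f (fst p @ [snd p]))"
  proof (rule sum.reindex_bij_witness[where i="\<lambda>p. fst p @ [snd p]" and j="\<lambda>ys. (butlast ys, last ys)"])
    fix ys :: "'n list" assume "ys \<in> {ys. length ys = Suc r}"
    then show "fst (butlast ys, last ys) @ [snd (butlast ys, last ys)] = ys"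
      by (cases ys rule: rev_cases) auto
  qed (auto, metis append_butlast_last_id Zero_not_Suc list.size(3))
  then show ?thesis
    by (simp only: sum.cartesian_product split_def)
qed

lemma vpow_Suc:
  "vpow T (Suc r) q v = (\<Sum>xs\<in>{xs. length xs = r}. \<Sum>j\<in>UNIV. T q (xs @ [j]) * vprod v xs * v $ j)"
  unfolding vpow_def by (subst sum_lists_length_Suc) (simp add: mult.assoc)

lemma vpow_cong: "(\<And>xs. length xs = r \<Longrightarrow> T q xs = T' q xs) \<Longrightarrow> vpow T r q v = vpow T' r q v"
  unfolding vpow_def by (intro sum.cong) auto

lemma vpow_eq_0: "(\<And>xs. length xs = r \<Longrightarrow> T q xs = 0) \<Longrightarrow> vpow T r q v = 0"
  unfolding vpow_def by (intro sum.neutral) auto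

lemma vpow_diff: "vpow (\<lambda>p xs. X p xs - Y p xs) r q v = vpow X r q v - vpow Y r q v"
  unfolding vpow_def by (simp add: left_diff_distrib sum_subtractf)

lemma vpow_cmult: "vpow (\<lambda>p xs. c * X p xs) r q v = c * vpow X r q v"
  unfolding vpow_def by (simp add: sum_distrib_left mult_ac)

lemma vpow_sum: "vpow (\<lambda>p xs. \<Sum>k\<in>K. X k p xs) r q v = (\<Sum>k\<in>K. vpow (X k) r q v)"
  unfolding vpow_def by (subst sum.swap) (simp add: sum_distrib_right)

lemma vpow_symz: "vpow (symz T) r q v = vpow T r q v"
proof -
  let ?P = "{\<sigma>. \<sigma> permutes {..<r}}"
  let ?L = "{xs::'a list. length xs = r}"
  have permuted: "(\<Sum>xs\<in>?L. T q (permute_list \<sigma> xs) * vprod v xs) = vpow T r q v"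
    if \<sigma>: "\<sigma> permutes {..<r}" for \<sigma>
    unfolding vpow_def
  proof (rule sum.reindex_bij_witness[where i="permute_list (inv \<sigma>)" and j="permute_list \<sigma>"])
    have \<sigma>': "inv \<sigma> permutes {..<r}" using \<sigma> by (rule permutes_inv)
    fix xs assume xs: "xs \<in> ?L"
    show "permute_list (inv \<sigma>) (permute_list \<sigma> xs) = xs"
      using xs permute_list_compose[of "inv \<sigma>" xs \<sigma>] \<sigma>' permutes_inv_o(1)[OF \<sigma>] by simp
    show "permute_list \<sigma> xs \<in> ?L" using xs by simp
    have "mset (permute_list \<sigma> xs) = mset xs"
      using xs \<sigma> by (intro mset_permute_list) simp
    then show "T q (permute_list \<sigma> xs) * vprod v (permute_list \<sigma> xs) = T q (permute_list \<sigma> xs) * vprod v xs"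
      by (metis vprod_mset_eq)
  next
    fix ys assume ys: "ys \<in> ?L"
    show "permute_list \<sigma> (permute_list (inv \<sigma>) ys) = ys"
      using ys permute_list_compose[of \<sigma> ys "inv \<sigma>"] \<sigma> permutes_inv_o(2)[OF \<sigma>] by simp
    show "permute_list (inv \<sigma>) ys \<in> ?L" using ys by simp
  qed
  have "vpow (symz T) r q v = (\<Sum>\<sigma>\<in>?P. \<Sum>xs\<in>?L. T q (permute_list \<sigma> xs) * vprod v xs) / fact r"
    unfolding vpow_def symz_def
    by (subst sum.swap) (simp add: sum_divide_distrib sum_distrib_right permute_list_def)
  also have "\<dots> = vpow T r q v"
    using card_permutations[of "{..<r}" r] by (simp add: permuted)
  finally show ?thesis .
qed

lemma vpow_covd_eqI:
  assumes "Suc r = r'" and "\<And>xs. length xs = r' \<Longrightarrow> symz (covd g T) q xs = T' q xs"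
  shows "vpow (covd g T) (Suc r) q w = vpow T' r' q w"
  using assms vpow_cong[of r' "symz (covd g T)" q T' w] by (simp add: vpow_symz)

definition drop_nth :: "nat \<Rightarrow> 'a list \<Rightarrow> 'a list" where
  "drop_nth p xs = take p xs @ drop (Suc p) xs"

lemma length_drop_nth: "p < length xs \<Longrightarrow> length (drop_nth p xs) = length xs - 1"
  by (simp add: drop_nth_def)

lemma drop_nth_list_update: "p < length xs \<Longrightarrow> drop_nth p (xs[p := c]) = drop_nth p xs"
  by (simp add: drop_nth_def)

lemma vprod_drop_nth: "p < length xs \<Longrightarrow> vprod w xs = w $ (xs ! p) * vprod w (drop_nth p xs)"
  by (subst id_take_nth_drop[of p xs]) (simp_all add: drop_nth_def)

text \<open>Relabelling xs[p := c] as xs turns the Christoffel term of the p-th index of a covariant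
  derivative into the Christoffel term Gamma^(xs!p)_bc w^b w^c of the equation of motion.\<close>
lemma sum_lists_christoffel_reindex:
  fixes \<Gamma> :: "'n::finite \<Rightarrow> 'n \<Rightarrow> 'n \<Rightarrow> real" and T :: "'n list \<Rightarrow> real"
  assumes p: "p < r"
  shows "(\<Sum>xs\<in>{xs. length xs = r}. \<Sum>j\<in>UNIV. \<Sum>c\<in>UNIV. \<Gamma> c j (xs!p) * T (xs[p:=c]) * vprod w xs * w$j)
       = (\<Sum>xs\<in>{xs. length xs = r}. T xs * (\<Sum>b\<in>UNIV. \<Sum>c\<in>UNIV. \<Gamma> (xs!p) b c * w$b * w$c) * vprod w (drop_nth p xs))"
proof -
  let ?L = "{xs::'n list. length xs = r}"
  define F where "F ys b = (\<Sum>j\<in>UNIV. \<Gamma> (ys!p) j b * w$j * w$b * T ys * vprod w (drop_nth p ys))" for ys b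
  have "(\<Sum>xs\<in>?L. \<Sum>j\<in>UNIV. \<Sum>c\<in>UNIV. \<Gamma> c j (xs!p) * T (xs[p:=c]) * vprod w xs * w$j)
      = (\<Sum>xs\<in>?L. \<Sum>c\<in>UNIV. F (xs[p:=c]) (xs!p))"
  proof (rule sum.cong[OF refl])
    fix xs assume "xs \<in> ?L"
    then have px: "p < length xs" using p by simp
    show "(\<Sum>j\<in>UNIV. \<Sum>c\<in>UNIV. \<Gamma> c j (xs!p) * T (xs[p:=c]) * vprod w xs * w$j)
        = (\<Sum>c\<in>UNIV. F (xs[p:=c]) (xs!p))"
      unfolding F_def by (subst sum.swap, intro sum.cong refl)
        (simp add: vprod_drop_nth[OF px, of w] drop_nth_list_update[OF px] px mult_ac)
  qed
  also have "\<dots> = (\<Sum>z\<in>?L \<times> UNIV. F ((fst z)[p:=snd z]) (fst z!p))"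
    by (simp only: sum.cartesian_product split_def)
  also have "\<dots> = (\<Sum>z\<in>?L \<times> UNIV. F (fst z) (snd z))"
    by (rule sum.reindex_bij_witness[where i="\<lambda>z. ((fst z)[p:=snd z], fst z!p)"
          and j="\<lambda>z. ((fst z)[p:=snd z], fst z!p)"]) (use p in auto)
  also have "\<dots> = (\<Sum>ys\<in>?L. \<Sum>b\<in>UNIV. F ys b)"
    by (simp only: sum.cartesian_product split_def)
  also have "\<dots> = (\<Sum>xs\<in>?L. T xs * (\<Sum>b\<in>UNIV. \<Sum>c\<in>UNIV. \<Gamma> (xs!p) b c * w$b * w$c) * vprod w (drop_nth p xs))"
    unfolding F_def
    by (intro sum.cong refl, subst sum.swap) (simp add: sum_distrib_left sum_distrib_right mult_ac)
  finally show ?thesis .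
qed

lemma sum_lists_symmetric_contract:
  fixes T :: "'n::finite list \<Rightarrow> real" and u :: "real^'n"
  assumes p: "p < r"
    and sym: "\<And>xs ys. length xs = r \<Longrightarrow> mset xs = mset ys \<Longrightarrow> T xs = T ys"
  shows "(\<Sum>xs\<in>{xs. length xs = r}. T xs * u $ (xs!p) * vprod w (drop_nth p xs))
       = (\<Sum>ys\<in>{ys. length ys = r - 1}. (\<Sum>c\<in>UNIV. T (ys @ [c]) * u $ c) * vprod w ys)"
proof -
  let ?L = "{xs::'n list. length xs = r}"
  let ?M = "{xs::'n list. length xs = r - 1}"
  define ins where "ins z = take p (fst z) @ snd z # drop p (fst z)" for z :: "'n list \<times> 'n"
  have "(\<Sum>ys\<in>?M. (\<Sum>c\<in>UNIV. T (ys @ [c]) * u $ c) * vprod w ys)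
      = (\<Sum>z\<in>?M \<times> UNIV. T (fst z @ [snd z]) * u $ snd z * vprod w (fst z))"
    by (simp only: sum.cartesian_product split_def sum_distrib_right)
  also have "\<dots> = (\<Sum>xs\<in>?L. T xs * u $ (xs!p) * vprod w (drop_nth p xs))"
  proof (rule sum.reindex_bij_witness[where i="\<lambda>xs. (drop_nth p xs, xs!p)" and j=ins])
    fix z :: "'n list \<times> 'n" assume "z \<in> ?M \<times> UNIV"
    then have lz: "length (fst z) = r - 1" by auto
    have drop_ins: "drop_nth p (ins z) = fst z" and nth_ins: "ins z ! p = snd z"
      using lz p by (auto simp: ins_def drop_nth_def nth_append min_def)
    then show "(drop_nth p (ins z), ins z ! p) = z" by simp
    show "ins z \<in> ?L" using lz p by (auto simp: ins_def)
    have "mset (ins z) = mset (fst z @ [snd z])"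
      unfolding ins_def by (simp, metis append_take_drop_id mset_append)
    then have "T (ins z) = T (fst z @ [snd z])"
      using lz p by (intro sym) (auto simp: ins_def)
    then show "T (ins z) * u $ (ins z ! p) * vprod w (drop_nth p (ins z))
        = T (fst z @ [snd z]) * u $ snd z * vprod w (fst z)"
      using drop_ins nth_ins by simp
  next
    fix xs :: "'n list" assume "xs \<in> ?L"
    then have lx: "length xs = r" by simp
    show "ins (drop_nth p xs, xs ! p) = xs"
      using lx p by (simp add: ins_def drop_nth_def min_def id_take_nth_drop[symmetric])
    show "(drop_nth p xs, xs ! p) \<in> ?M \<times> UNIV" using lx p by (simp add: length_drop_nth)
  qed
  finally show ?thesis by simp
qed

section \<open>Derivatives along solutions\<close>

definition motion_at :: "(real^'n \<Rightarrow> real^'n^'n) \<Rightarrow> (real^'n \<Rightarrow> real^'n)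
    \<Rightarrow> (real \<Rightarrow> real^'n) \<Rightarrow> (real \<Rightarrow> real^'n) \<Rightarrow> real^'n \<Rightarrow> real \<Rightarrow> bool" where
  "motion_at g Q x v a t \<longleftrightarrow> (x has_vector_derivative v t) (at t) \<and> (v has_vector_derivative a) (at t) \<and>
     (\<forall>i. a $ i = - (\<Sum>b\<in>UNIV. \<Sum>c\<in>UNIV. christ g i b c (x t) * v t $ b * v t $ c) - Q (x t) $ i)"

lemma first_integralI:
  assumes "\<And>x v a t. motion_at g Q x v a t \<Longrightarrow> x t \<in> U \<Longrightarrow>
             ((\<lambda>\<tau>. F \<tau> (x \<tau>) (v \<tau>)) has_real_derivative 0) (at t)"
  shows "first_integral g Q U F"
  unfolding first_integral_def
proof (intro allI impI ballI)
  fix J x v t1 t2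
  assume "is_solution g Q U J x v" and t12: "t1 \<in> J" "t2 \<in> J"
  then obtain a where J: "open J" "is_interval J"
    and motion: "\<And>t. t \<in> J \<Longrightarrow> x t \<in> U \<and> motion_at g Q x v (a t) t"
    unfolding is_solution_def motion_at_def by blast
  have "\<exists>c. \<forall>t\<in>J. F t (x t) (v t) = c"
  proof (rule has_field_derivative_zero_constant)
    show "convex J" using J(2) by (rule is_interval_convex)
    fix t assume "t \<in> J"
    then have "((\<lambda>t. F t (x t) (v t)) has_real_derivative 0) (at t)"
      using assms[of x v "a t" t] motion by simp
    then show "((\<lambda>t. F t (x t) (v t)) has_real_derivative 0) (at t within J)"
      by (rule has_field_derivative_at_within)
  qed
  then show "F t1 (x t1) (v t1) = F t2 (x t2) (v t2)"
    using t12 by auto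
qed

lemma has_real_derivative_vec_nth:
  assumes "(v has_vector_derivative w) (at t)"
  shows "((\<lambda>\<tau>. v \<tau> $ i) has_real_derivative w $ i) (at t)"
proof -
  have "(v has_derivative (\<lambda>h. h *\<^sub>R w)) (at t)"
    using assms by (simp add: has_vector_derivative_def)
  then have "((\<lambda>\<tau>. v \<tau> $ i) has_derivative (\<lambda>h. (h *\<^sub>R w) $ i)) (at t)"
    by (rule bounded_linear.has_derivative[OF bounded_linear_vec_nth])
  then show ?thesis
    by (rule has_derivative_imp_has_field_derivative) (simp add: mult.commute)
qed

lemma has_real_derivative_vprod:
  assumes "\<And>i. ((\<lambda>\<tau>. v \<tau> $ i) has_real_derivative a $ i) (at t)"
  shows "((\<lambda>\<tau>. vprod (v \<tau>) xs) has_real_derivative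
           (\<Sum>p<length xs. a $ (xs!p) * vprod (v t) (drop_nth p xs))) (at t)"
proof (induction xs)
  case Nil
  then show ?case by simp
next
  case (Cons x xs)
  have "((\<lambda>\<tau>. v \<tau> $ x * vprod (v \<tau>) xs) has_real_derivative
        (a $ x * vprod (v t) xs + v t $ x * (\<Sum>p<length xs. a $ (xs!p) * vprod (v t) (drop_nth p xs)))) (at t)"
    using DERIV_mult[OF assms[of x] Cons] by (simp add: mult.commute)
  moreover have "(\<Sum>p<length (x#xs). a $ ((x#xs)!p) * vprod (v t) (drop_nth p (x#xs)))
     = a $ x * vprod (v t) xs + v t $ x * (\<Sum>p<length xs. a $ (xs!p) * vprod (v t) (drop_nth p xs))"
    by (simp add: sum.lessThan_Suc_shift drop_nth_def sum_distrib_left mult_ac del: sum.lessThan_Suc)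
  ultimately show ?case by simp
qed

lemma has_real_derivative_comp_pd:
  assumes f: "f differentiable (at (x t))" and x: "(x has_vector_derivative w) (at t)"
  shows "((\<lambda>\<tau>. f (x \<tau>)) has_real_derivative (\<Sum>j\<in>UNIV. pd f j (x t) * w $ j)) (at t)"
proof -
  let ?F = "frechet_derivative f (at (x t))"
  have lin: "linear ?F" using f by (rule linear_frechet_derivative)
  have "((\<lambda>\<tau>. f (x \<tau>)) has_derivative (\<lambda>h. ?F (h *\<^sub>R w))) (at t)"
    using x f by (intro has_derivative_compose[of x _ _ _ f])
      (simp_all add: has_vector_derivative_def frechet_derivative_works)
  moreover have "?F (h *\<^sub>R w) = h * (\<Sum>j\<in>UNIV. pd f j (x t) * w $ j)" for h
  proof -
    have "?F w = ?F (\<Sum>j\<in>UNIV. w $ j *\<^sub>R axis j 1)"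
      using basis_expansion[of w] by (simp add: scalar_mult_eq_scaleR)
    also have "\<dots> = (\<Sum>j\<in>UNIV. w $ j * ?F (axis j 1))"
      by (simp add: linear_sum[OF lin] linear_scale[OF lin])
    finally show ?thesis
      by (simp add: linear_scale[OF lin] pd_def mult.commute)
  qed
  ultimately show ?thesis
    by (intro has_derivative_imp_has_field_derivative) (auto simp: mult.commute)
qed

lemma has_real_derivative_pow_div: "1 \<le> k \<Longrightarrow> ((\<lambda>\<tau>. \<tau>^k / real k) has_real_derivative t^(k-1)) (at t)"
  using DERIV_cdivide[OF DERIV_pow[of k t UNIV], of "real k"] by simp

lemma vpow_covd:
  "vpow (covd g T) (Suc r) q w
     = (\<Sum>xs\<in>{xs. length xs = r}. \<Sum>j\<in>UNIV. pd (\<lambda>p. T p xs) j q * vprod w xs * w $ j)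
       - (\<Sum>p<r. \<Sum>xs\<in>{xs. length xs = r}.
            T q xs * (\<Sum>b\<in>UNIV. \<Sum>c\<in>UNIV. christ g (xs!p) b c q * w $ b * w $ c) * vprod w (drop_nth p xs))"
proof -
  let ?L = "{xs::'a list. length xs = r}"
  have "vpow (covd g T) (Suc r) q w
      = (\<Sum>xs\<in>?L. \<Sum>j\<in>UNIV. pd (\<lambda>p. T p xs) j q * vprod w xs * w $ j)
        - (\<Sum>xs\<in>?L. \<Sum>j\<in>UNIV. \<Sum>p<r. \<Sum>c\<in>UNIV. christ g c j (xs!p) q * T q (xs[p:=c]) * vprod w xs * w $ j)"
    unfolding vpow_Suc covd_def Let_def
    by (simp add: left_diff_distrib sum_distrib_right sum_subtractf)
  also have "(\<Sum>xs\<in>?L. \<Sum>j\<in>UNIV. \<Sum>p<r. \<Sum>c\<in>UNIV. christ g c j (xs!p) q * T q (xs[p:=c]) * vprod w xs * w $ j)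
      = (\<Sum>p<r. \<Sum>xs\<in>?L. \<Sum>j\<in>UNIV. \<Sum>c\<in>UNIV. christ g c j (xs!p) q * T q (xs[p:=c]) * vprod w xs * w $ j)"
    by (subst sum.swap, subst (2) sum.swap, rule refl)
  also have "\<dots> = (\<Sum>p<r. \<Sum>xs\<in>?L.
      T q xs * (\<Sum>b\<in>UNIV. \<Sum>c\<in>UNIV. christ g (xs!p) b c q * w $ b * w $ c) * vprod w (drop_nth p xs))"
    by (intro sum.cong refl sum_lists_christoffel_reindex) simp
  finally show ?thesis .
qed

lemma has_real_derivative_vpow:
  fixes T :: "'n::finite tensor" and x v :: "real \<Rightarrow> real^'n"
  assumes x_deriv: "(x has_vector_derivative v t) (at t)"
    and v_deriv: "(v has_vector_derivative a) (at t)"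
    and T_diff: "\<And>xs. length xs = r \<Longrightarrow> (\<lambda>q. T q xs) differentiable (at (x t))"
  shows "((\<lambda>\<tau>. vpow T r (x \<tau>) (v \<tau>)) has_real_derivative
     (\<Sum>xs\<in>{xs. length xs = r}. (\<Sum>j\<in>UNIV. pd (\<lambda>q. T q xs) j (x t) * v t $ j) * vprod (v t) xs
        + T (x t) xs * (\<Sum>p<r. a $ (xs!p) * vprod (v t) (drop_nth p xs)))) (at t)"
  unfolding vpow_def
proof (rule DERIV_sum)
  fix xs :: "'n list" assume "xs \<in> {xs. length xs = r}"
  then have r: "length xs = r" by simp
  show "((\<lambda>\<tau>. T (x \<tau>) xs * vprod (v \<tau>) xs) has_real_derivative
        (\<Sum>j\<in>UNIV. pd (\<lambda>q. T q xs) j (x t) * v t $ j) * vprod (v t) xs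
        + T (x t) xs * (\<Sum>p<r. a $ (xs!p) * vprod (v t) (drop_nth p xs))) (at t)"
    using DERIV_mult[OF has_real_derivative_comp_pd[OF T_diff[OF r] x_deriv]
        has_real_derivative_vprod[of v a t xs, OF has_real_derivative_vec_nth[OF v_deriv]]] r
    by (simp add: mult.commute)
qed

lemma has_real_derivative_vpow_along_solution:
  assumes motion: "motion_at g Q x v a t"
    and T_diff: "\<And>xs. length xs = r \<Longrightarrow> (\<lambda>q. T q xs) differentiable (at (x t))"
    and T_sym: "\<And>xs ys. length xs = r \<Longrightarrow> mset xs = mset ys \<Longrightarrow> T (x t) xs = T (x t) ys"
  shows "((\<lambda>\<tau>. vpow T r (x \<tau>) (v \<tau>)) has_real_derivative
     vpow (covd g T) (Suc r) (x t) (v t) - real r * vpow (contr T Q) (r - 1) (x t) (v t)) (at t)"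
proof -
  let ?L = "{xs::'n list. length xs = r}"
  define q where "q = x t"
  define w where "w = v t"
  define \<Gamma>w where "\<Gamma>w i = (\<Sum>b\<in>UNIV. \<Sum>c\<in>UNIV. christ g i b c q * w $ b * w $ c)" for i
  have contract_Q: "(\<Sum>xs\<in>?L. T q xs * Q q $ (xs!p) * vprod w (drop_nth p xs)) = vpow (contr T Q) (r - 1) q w"
    if "p < r" for p
    unfolding vpow_def contr_def
    by (rule sum_lists_symmetric_contract[OF that]) (use T_sym in \<open>simp add: q_def\<close>)
  have a: "a $ i = - \<Gamma>w i - Q q $ i" for i
    using motion unfolding motion_at_def \<Gamma>w_def q_def w_def by simp
  have "(\<Sum>xs\<in>?L. T q xs * (\<Sum>p<r. a $ (xs!p) * vprod w (drop_nth p xs)))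
      = (\<Sum>p<r. \<Sum>xs\<in>?L. - (T q xs * \<Gamma>w (xs!p) * vprod w (drop_nth p xs))
                          - T q xs * Q q $ (xs!p) * vprod w (drop_nth p xs))"
    by (subst sum.swap) (simp add: sum_distrib_left a algebra_simps)
  also have "\<dots> = - (\<Sum>p<r. \<Sum>xs\<in>?L. T q xs * \<Gamma>w (xs!p) * vprod w (drop_nth p xs))
      - real r * vpow (contr T Q) (r - 1) q w"
    by (simp add: sum_subtractf sum_negf contract_Q)
  finally have "(\<Sum>xs\<in>?L. (\<Sum>j\<in>UNIV. pd (\<lambda>q. T q xs) j q * w $ j) * vprod w xs
        + T q xs * (\<Sum>p<r. a $ (xs!p) * vprod w (drop_nth p xs)))
      = vpow (covd g T) (Suc r) q w - real r * vpow (contr T Q) (r - 1) q w"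
    unfolding vpow_covd \<Gamma>w_def
    by (simp add: sum.distrib sum_distrib_left sum_distrib_right mult_ac)
  moreover have "((\<lambda>\<tau>. vpow T r (x \<tau>) (v \<tau>)) has_real_derivative
     (\<Sum>xs\<in>?L. (\<Sum>j\<in>UNIV. pd (\<lambda>q. T q xs) j q * w $ j) * vprod w xs
        + T q xs * (\<Sum>p<r. a $ (xs!p) * vprod w (drop_nth p xs)))) (at t)"
    using motion unfolding q_def w_def motion_at_def by (intro has_real_derivative_vpow T_diff) auto
  ultimately show ?thesis
    by (simp add: q_def w_def)
qed

lemma vpow_covd_killing: "killing g U p K \<Longrightarrow> q \<in> U \<Longrightarrow> vpow (covd g K) (Suc p) q w = 0"
  unfolding killing_def by (subst vpow_symz[symmetric]) (auto intro: vpow_eq_0)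

lemma has_real_derivative_vpow_killing:
  assumes motion: "motion_at g Q x v a t" and xU: "x t \<in> U" and K: "killing g U p K"
    and K_diff: "\<And>xs. length xs = p \<Longrightarrow> (\<lambda>q. K q xs) differentiable (at (x t))"
  shows "((\<lambda>\<tau>. vpow K p (x \<tau>) (v \<tau>)) has_real_derivative
           - (real p * vpow (contr K Q) (p - 1) (x t) (v t))) (at t)"
proof -
  have K_sym: "K (x t) xs = K (x t) ys" if "length xs = p" "mset xs = mset ys" for xs ys
    using K xU that unfolding killing_def sym_tensor_def by blast
  have "((\<lambda>\<tau>. vpow K p (x \<tau>) (v \<tau>)) has_real_derivative
      vpow (covd g K) (Suc p) (x t) (v t) - real p * vpow (contr K Q) (p - 1) (x t) (v t)) (at t)"
    by (rule has_real_derivative_vpow_along_solution[OF motion K_diff K_sym])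
  then show ?thesis
    by (simp only: vpow_covd_killing[OF K xU] diff_0)
qed

section \<open>Differentiability of the geometric data\<close>

lemma smooth_on_differentiable: "smooth_on U f \<Longrightarrow> q \<in> U \<Longrightarrow> f differentiable (at q)"
  unfolding smooth_on_def by (metis Ck.simps(2))

lemma smooth_on_pd: "smooth_on U f \<Longrightarrow> smooth_on U (pd f i)"
  unfolding smooth_on_def by (metis Ck.simps(2))

lemma differentiable_det:
  fixes f :: "'n::finite \<Rightarrow> 'n \<Rightarrow> real^'m \<Rightarrow> real"
  assumes "\<And>i j. f i j differentiable (at q)"
  shows "(\<lambda>p. det (\<chi> i j. f i j p)) differentiable (at q)"
proof -
  have "(\<lambda>p. \<Prod>i\<in>I. f i (\<sigma> i) p) differentiable (at q)" for \<sigma> I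
    by (induction I rule: infinite_finite_induct) (auto intro: differentiable_mult assms)
  then show ?thesis
    unfolding det_def by (auto intro!: differentiable_sum finite_permutations)
qed

lemma matrix_inv_cramer:
  fixes A :: "real^'n^'n"
  assumes "invertible A"
  shows "matrix_inv A $ a $ d = det (\<chi> i j. if j = a then axis d 1 $ i else A $ i $ j) / det A"
proof -
  have "A ** matrix_inv A = mat 1"
    using assms unfolding invertible_def matrix_inv_def by (metis (mono_tags, lifting) someI_ex)
  then have "A *v (matrix_inv A *v axis d 1) = axis d 1"
    by (simp add: matrix_vector_mul_assoc)
  then have "matrix_inv A *v axis d 1 = (\<chi> k. det (\<chi> i j. if j = k then axis d 1 $ i else A $ i $ j) / det A)"
    using cramer assms invertible_det_nz by blast
  moreover have "(matrix_inv A *v axis d 1) $ a = matrix_inv A $ a $ d"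
    by (simp add: matrix_vector_mult_def axis_def if_distrib cong: if_cong)
  ultimately show ?thesis by simp
qed

context
  fixes g :: "real^'n \<Rightarrow> real^'n^'n" and U :: "(real^'n) set"
  assumes U: "open U"
    and g_smooth: "\<And>a b. smooth_on U (\<lambda>q. g q $ a $ b)"
    and g_nondeg: "\<And>q. q \<in> U \<Longrightarrow> invertible (g q)"
begin

lemma differentiable_matrix_inv:
  assumes q: "q \<in> U"
  shows "(\<lambda>p. matrix_inv (g p) $ a $ d) differentiable (at q)"
proof -
  let ?cramer = "\<lambda>p. det (\<chi> i j. if j = a then axis d 1 $ i else g p $ i $ j) / det (\<chi> i j. g p $ i $ j)"
  have g_entry: "(\<chi> i j. g p $ i $ j) = g p" for p by (simp add: vec_eq_iff)
  have g_diff: "(\<lambda>p. g p $ i $ j) differentiable (at q)" for i j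
    by (rule smooth_on_differentiable[OF g_smooth q])
  have "(\<lambda>p. if j = a then axis d 1 $ i else g p $ i $ j) differentiable (at q)" for i j
    by (cases "j = a") (simp_all add: g_diff)
  then have "?cramer differentiable (at q)"
    using g_nondeg[OF q]
    by (intro differentiable_divide differentiable_det) (auto simp: g_diff g_entry invertible_det_nz)
  then obtain D where D: "(?cramer has_derivative D) (at q)"
    by (auto simp: differentiable_def)
  have "((\<lambda>p. matrix_inv (g p) $ a $ d) has_derivative D) (at q)"
    by (rule has_derivative_transform_within_open[OF D U q])
       (simp add: matrix_inv_cramer[OF g_nondeg] g_entry)
  then show ?thesis by (auto simp: differentiable_def)
qed

lemma differentiable_christ:
  assumes q: "q \<in> U"
  shows "(\<lambda>p. christ g a b c p) differentiable (at q)"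
proof -
  have "(\<lambda>p. pd (\<lambda>p. g p $ i $ j) k p) differentiable (at q)" for i j k
    by (rule smooth_on_differentiable[OF smooth_on_pd[OF g_smooth] q])
  then show ?thesis
    unfolding christ_def
    by (intro differentiable_mult differentiable_const differentiable_sum ballI
        differentiable_add differentiable_diff differentiable_matrix_inv[OF q]) auto
qed

lemma differentiable_covd:
  assumes q: "q \<in> U"
    and T_smooth: "\<And>xs. length xs = r \<Longrightarrow> smooth_on U (\<lambda>q. T q xs)"
    and ys: "length ys = Suc r"
  shows "(\<lambda>p. covd g T p ys) differentiable (at q)"
proof -
  have T_diff: "(\<lambda>p. T p zs) differentiable (at q)" if "length zs = r" for zs
    using T_smooth[OF that] q by (rule smooth_on_differentiable)
  have "(\<lambda>p. pd (\<lambda>p. T p (butlast ys)) (last ys) p) differentiable (at q)"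
    using ys by (intro smooth_on_differentiable[OF smooth_on_pd q] T_smooth) simp
  then show ?thesis
    unfolding covd_def Let_def using ys
    by (intro differentiable_diff differentiable_sum ballI differentiable_mult
        differentiable_christ[OF q] T_diff) auto
qed

end

lemma differentiable_symz:
  assumes "\<And>xs. length xs = r \<Longrightarrow> (\<lambda>p. T p xs) differentiable (at q)"
    and "length ys = r"
  shows "(\<lambda>p. symz T p ys) differentiable (at q)"
  unfolding symz_def
  by (intro differentiable_divide differentiable_sum ballI assms(1) finite_permutations)
     (auto simp: assms(2))

section \<open>The coefficient identity\<close>

lemma sum_rank_telescope:
  fixes A D R :: "nat \<Rightarrow> real"
  assumes m: "3 \<le> m"
    and link: "\<And>r. 2 \<le> r \<Longrightarrow> r \<le> m - 2 \<Longrightarrow> A r + D (r - 1) = real (r + 1) * R (r + 1)"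
  shows "(\<Sum>r=1..m-1. A r + D r - real r * R r) = A 1 + A (m-1) + D (m-2) + D (m-1) - R 1 - 2 * R 2"
proof -
  obtain d where d: "m = d + 3" using m by (metis add.commute le_Suc_ex)
  have "(\<Sum>r=1..d+2. A r + D r - real r * R r) = A 1 + A (d+2) + D (d+1) + D (d+2) - R 1 - 2 * R 2"
    if "d + 3 \<le> m" for d
    using that
  proof (induction d)
    case 0
    then show ?case by (simp add: numeral_2_eq_2)
  next
    case (Suc d)
    have "A (d+2) + D (d+1) = real (d+3) * R (d+3)"
      using link[of "d+2"] Suc.prems by (simp add: add.commute numeral_3_eq_3)
    then show ?case
      using Suc by (simp add: numeral_3_eq_3 numeral_2_eq_2)
  qed
  then show ?thesis using d by (simp add: numeral_3_eq_3 numeral_2_eq_2)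
qed

lemma sum_atLeast0_atMost_if_less:
  "(\<Sum>k=0..n. (t::real)^k * (if k < n then f k else 0)) = (\<Sum>k<n. t^k * f k)"
proof -
  have "{0..n} = insert n {..<n}" by auto
  then show ?thesis by simp
qed

lemma sum_shift_pow_pred:
  "(\<Sum>k=1..n. (t::real)^(k-1) * f (k-1)) = (\<Sum>k=0..n. t^k * (if k < n then f k else 0))"
  unfolding sum_atLeast0_atMost_if_less by (induction n) (auto simp: sum.atLeast0_atMost_Suc)

lemma sum_shift_pow_deriv:
  "(\<Sum>k=0..n. real k * (t::real)^(k-1) * f k) = (\<Sum>k=0..n. t^k * (if k < n then real (k+1) * f (k+1) else 0))"
  unfolding sum_atLeast0_atMost_if_less by (induction n) (auto simp: sum.atLeast0_atMost_Suc)

lemma sum_atLeast1_atMost_eq_atLeast0: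
  "(\<Sum>k=1..n. (t::real)^k * f k) = (\<Sum>k=0..n. t^k * (if k = 0 then 0 else f k))"
  by (induction n) (auto simp: sum.atLeast0_atMost_Suc)

lemma sum_pow_if_eq_single:
  "(\<Sum>k=0..n. (t::real)^k * (if k = j then c else 0)) = (if j \<le> n then t^j * c else 0)"
  by (simp add: if_distrib[of "\<lambda>z. _ * z"] sum.delta' cong: if_cong)

text \<open>The time derivative of I^(m)_n, written through scalars at the current point:
  P k r, D k r and R k r stand for L_(k) of rank r contracted with r velocities, its covariant
  derivative contracted with r + 1 velocities, and L_(k) with one index contracted with Q and
  the other r - 1 with velocities; cS k and cC are the Q-contractions of
  L_(k)(i1..i(m-1);im) and C; cK k and cG are the derivatives of L_(k)c Q^c and G along the
  velocity.\<close>
definition Imn_rate :: "(nat \<Rightarrow> nat \<Rightarrow> real) \<Rightarrow> (nat \<Rightarrow> nat \<Rightarrow> real) \<Rightarrow> (nat \<Rightarrow> nat \<Rightarrow> real)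
    \<Rightarrow> (nat \<Rightarrow> real) \<Rightarrow> real \<Rightarrow> (nat \<Rightarrow> real) \<Rightarrow> real \<Rightarrow> real \<Rightarrow> nat \<Rightarrow> nat \<Rightarrow> real \<Rightarrow> real" where
  "Imn_rate P D R cS cC cK cG s m n t =
     - real m * cC - (\<Sum>k=1..n. t^(k-1) * D (k-1) (m-1) - t^k / real k * real m * cS (k-1))
     + (\<Sum>r=1..m-1. \<Sum>k=0..n. real k * t^(k-1) * P k r + t^k * (D k r - real r * R k r))
     + s * t^n + (\<Sum>k=1..n. t^(k-1) * R (k-1) 1 + t^k / real k * cK (k-1)) + cG"

definition Imn_rate_coeff :: "(nat \<Rightarrow> nat \<Rightarrow> real) \<Rightarrow> (nat \<Rightarrow> nat \<Rightarrow> real) \<Rightarrow> (nat \<Rightarrow> nat \<Rightarrow> real)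
    \<Rightarrow> (nat \<Rightarrow> real) \<Rightarrow> real \<Rightarrow> (nat \<Rightarrow> real) \<Rightarrow> real \<Rightarrow> real \<Rightarrow> nat \<Rightarrow> nat \<Rightarrow> nat \<Rightarrow> real" where
  "Imn_rate_coeff P D R cS cC cK cG s m n k =
     (if k = 0 then cG - real m * cC else (real m * cS (k-1) + cK (k-1)) / real k)
     + (if k < n then R k 1 - D k (m-1) else s)
     + (\<Sum>r=1..m-1. (if k < n then real (k+1) * P (k+1) r else 0) + D k r - real r * R k r)"

lemma Imn_rate_eq_sum_coeff:
  "Imn_rate P D R cS cC cK cG s m n t = (\<Sum>k=0..n. t^k * Imn_rate_coeff P D R cS cC cK cG s m n k)"
proof -
  have const: "cG - real m * cC = (\<Sum>k=0..n. t^k * (if k = 0 then cG - real m * cC else 0))"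
    by (simp add: sum_pow_if_eq_single)
  have top: "s * t^n = (\<Sum>k=0..n. t^k * (if k = n then s else 0))"
    by (simp add: sum_pow_if_eq_single)
  have k_terms: "(\<Sum>k=1..n. t^(k-1) * D (k-1) (m-1) - t^k / real k * real m * cS (k-1))
      - (\<Sum>k=1..n. t^(k-1) * R (k-1) 1 + t^k / real k * cK (k-1))
      = - (\<Sum>k=0..n. t^k * (if k < n then R k 1 - D k (m-1) else 0))
        - (\<Sum>k=0..n. t^k * (if k = 0 then 0 else (real m * cS (k-1) + cK (k-1)) / real k))"
  proof -
    have "(\<Sum>k=1..n. t^(k-1) * D (k-1) (m-1) - t^k / real k * real m * cS (k-1))
        - (\<Sum>k=1..n. t^(k-1) * R (k-1) 1 + t^k / real k * cK (k-1))
        = - (\<Sum>k=1..n. t^(k-1) * (R (k-1) 1 - D (k-1) (m-1)))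
          - (\<Sum>k=1..n. t^k * ((real m * cS (k-1) + cK (k-1)) / real k))"
      by (simp add: sum_subtractf sum.distrib algebra_simps add_divide_distrib)
    then show ?thesis
      by (simp only: sum_shift_pow_pred[where f="\<lambda>k. R k 1 - D k (m-1)"] sum_atLeast1_atMost_eq_atLeast0)
  qed
  have r_terms: "(\<Sum>r=1..m-1. \<Sum>k=0..n. real k * t^(k-1) * P k r + t^k * (D k r - real r * R k r))
      = (\<Sum>k=0..n. t^k * (\<Sum>r=1..m-1. (if k < n then real (k+1) * P (k+1) r else 0) + D k r - real r * R k r))"
  proof -
    have "(\<Sum>k=0..n. real k * t^(k-1) * P k r + t^k * (D k r - real r * R k r))
        = (\<Sum>k=0..n. t^k * ((if k < n then real (k+1) * P (k+1) r else 0) + D k r - real r * R k r))" for r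
      unfolding sum.distrib sum_shift_pow_deriv by (simp flip: sum.distrib add: algebra_simps)
    then show ?thesis
      by (simp only: sum_distrib_left sum.swap[of _ "{1..m-1}"])
  qed
  have "(\<Sum>k=0..n. t^k * Imn_rate_coeff P D R cS cC cK cG s m n k)
      = (\<Sum>k=0..n. t^k * (if k = 0 then cG - real m * cC else 0)
          + t^k * (if k = 0 then 0 else (real m * cS (k-1) + cK (k-1)) / real k)
          + t^k * (if k < n then R k 1 - D k (m-1) else 0) + t^k * (if k = n then s else 0)
          + t^k * (\<Sum>r=1..m-1. (if k < n then real (k+1) * P (k+1) r else 0) + D k r - real r * R k r))"
    by (rule sum.cong) (auto simp: Imn_rate_coeff_def algebra_simps)
  then show ?thesis
    unfolding Imn_rate_def using const top k_terms r_terms by (simp only: sum.distrib)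
qed

lemma Imn_rate_coeff_eq_0:
  fixes P D R :: "nat \<Rightarrow> nat \<Rightarrow> real" and cS cK :: "nat \<Rightarrow> real"
  assumes m: "m \<ge> 3" and n: "n \<ge> 1" and k: "k \<le> n"
    and iii_1: "D n (m-2) = - (real m / real n) * cS (n-1)"
    and iii_2: "\<And>k. 2 \<le> k \<Longrightarrow> k \<le> n \<Longrightarrow> D (k-1) (m-2) = - (real m / real (k-1)) * cS (k-2) - real k * P k (m-1)"
    and iii_3: "D 0 (m-2) = real m * cC - P 1 (m-1)"
    and iii_4: "\<And>r. 2 \<le> r \<Longrightarrow> r \<le> m-2 \<Longrightarrow> D n (r-1) = real (r+1) * R n (r+1)"
    and iii_5: "\<And>k r. 1 \<le> k \<Longrightarrow> k \<le> n \<Longrightarrow> 2 \<le> r \<Longrightarrow> r \<le> m-2 \<Longrightarrow>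
               D (k-1) (r-1) = real (r+1) * R (k-1) (r+1) - real k * P k r"
    and iii_6: "cK (n-1) = 2 * real n * R n 2"
    and iii_7: "\<And>k. 2 \<le> k \<Longrightarrow> k \<le> n \<Longrightarrow> cK (k-2) = 2 * real (k-1) * R (k-1) 2 - real k * real (k-1) * P k 1"
    and iii_8: "cG = 2 * R 0 2 - P 1 1"
    and ii: "R n 1 = s"
    and i_b: "D n (m-1) = 0"
  shows "Imn_rate_coeff P D R cS cC cK cG s m n k = 0"
proof -
  define A where "A r = (if k < n then real (k+1) * P (k+1) r else 0)" for r
  have "A r + D k (r-1) = real (r+1) * R k (r+1)" if "2 \<le> r" "r \<le> m-2" for r
  proof (cases "k < n")
    case True
    then show ?thesis using iii_5[of "Suc k" r] that by (simp add: A_def)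
  next
    case False
    then show ?thesis using iii_4[of r] that k by (simp add: A_def)
  qed
  then have ranks: "(\<Sum>r=1..m-1. A r + D k r - real r * R k r)
      = A 1 + A (m-1) + D k (m-2) + D k (m-1) - R k 1 - 2 * R k 2"
    by (rule sum_rank_telescope[OF m])
  have coeff: "Imn_rate_coeff P D R cS cC cK cG s m n k
      = (if k = 0 then cG - real m * cC else (real m * cS (k-1) + cK (k-1)) / real k)
        + (if k < n then R k 1 - D k (m-1) else s)
        + A 1 + A (m-1) + D k (m-2) + D k (m-1) - R k 1 - 2 * R k 2"
    unfolding Imn_rate_coeff_def ranks[unfolded A_def] by (simp add: A_def)
  consider "k = 0" | "0 < k" "k < n" | "k = n" "0 < k"
    using k n by linarith
  then show ?thesis
  proof cases
    case 1
    then show ?thesis unfolding coeff using iii_3 iii_8 n by (simp add: A_def)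
  next
    case 2
    have "D k (m-2) = - (real m / real k) * cS (k-1) - real (Suc k) * P (Suc k) (m-1)"
      and "cK (k-1) = 2 * real k * R k 2 - real (Suc k) * real k * P (Suc k) 1"
      using iii_2[of "Suc k"] iii_7[of "Suc k"] 2 by simp_all
    then show ?thesis unfolding coeff using 2 by (simp add: A_def field_simps)
  next
    case 3
    then show ?thesis unfolding coeff using iii_1 iii_6 ii i_b by (simp add: A_def field_simps)
  qed
qed

section \<open>The hierarchy of tensors\<close>

lemma Imn_expand:
  "Imn g Q C L G s m n t q v = vpow C m q v
     - (\<Sum>k=1..n. t^k / real k * vpow (symz (covd g (L (k-1) (m-1)))) m q v)
     + (\<Sum>r=1..m-1. \<Sum>k=0..n. t^k * vpow (L k r) r q v)
     + s * t^(n+1) / real (n+1) + (\<Sum>k=1..n. t^k / real k * contr (L (k-1) 1) Q q []) + G q"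
  unfolding Imn_def by (simp only: vpow_diff vpow_sum vpow_cmult)

locale tensor_hierarchy =
  fixes g :: "real^'n::finite \<Rightarrow> real^'n^'n" and Q :: "real^'n \<Rightarrow> real^'n"
    and U :: "(real^'n) set" and C :: "'n tensor" and L :: "nat \<Rightarrow> nat \<Rightarrow> 'n tensor"
    and G :: "real^'n \<Rightarrow> real" and m n :: nat
  assumes U: "open U"
    and g_smooth: "\<And>a b. smooth_on U (\<lambda>q. g q $ a $ b)"
    and g_nondeg: "\<And>q. q \<in> U \<Longrightarrow> invertible (g q)"
    and Q_smooth: "\<And>a. smooth_on U (\<lambda>q. Q q $ a)"
    and m: "m \<ge> 3"
    and G_smooth: "smooth_on U G"
    and C_smooth: "smooth_tensor U m C"
    and C_killing: "killing g U m C"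
    and L_smooth: "\<And>k r. k \<le> n \<Longrightarrow> 1 \<le> r \<Longrightarrow> r \<le> m - 1 \<Longrightarrow> smooth_tensor U r (L k r)"
    and L_sym: "\<And>k r. k \<le> n \<Longrightarrow> 1 \<le> r \<Longrightarrow> r \<le> m - 1 \<Longrightarrow> sym_tensor U r (L k r)"
    and i_a: "\<And>k. k < n \<Longrightarrow> killing g U m (symz (covd g (L k (m - 1))))"
begin

context
  fixes x v :: "real \<Rightarrow> real^'n" and a :: "real^'n" and t :: real
  assumes motion: "motion_at g Q x v a t" and xU: "x t \<in> U"
begin

lemma has_real_derivative_vpow_C:
  "((\<lambda>\<tau>. vpow C m (x \<tau>) (v \<tau>)) has_real_derivative
     - (real m * vpow (contr C Q) (m - 1) (x t) (v t))) (at t)"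
  using C_smooth xU unfolding smooth_tensor_def
  by (intro has_real_derivative_vpow_killing[OF motion xU C_killing] smooth_on_differentiable) auto

lemma has_real_derivative_vpow_symz_covd_L:
  assumes "k < n"
  shows "((\<lambda>\<tau>. vpow (symz (covd g (L k (m - 1)))) m (x \<tau>) (v \<tau>)) has_real_derivative
     - (real m * vpow (contr (symz (covd g (L k (m - 1)))) Q) (m - 1) (x t) (v t))) (at t)"
proof (rule has_real_derivative_vpow_killing[OF motion xU i_a[OF assms]])
  have L_smooth': "smooth_on U (\<lambda>q. L k (m - 1) q xs)" if "length xs = m - 1" for xs
    using L_smooth[of k "m - 1"] assms m that unfolding smooth_tensor_def by auto
  fix xs :: "'n list" assume "length xs = m"
  then show "(\<lambda>q. symz (covd g (L k (m - 1))) q xs) differentiable (at (x t))"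
    using m by (intro differentiable_symz differentiable_covd[OF U g_smooth g_nondeg xU L_smooth']) auto
qed

lemma has_real_derivative_vpow_L:
  assumes "k \<le> n" "1 \<le> r" "r \<le> m - 1"
  shows "((\<lambda>\<tau>. vpow (L k r) r (x \<tau>) (v \<tau>)) has_real_derivative
     vpow (covd g (L k r)) (Suc r) (x t) (v t) - real r * vpow (contr (L k r) Q) (r - 1) (x t) (v t)) (at t)"
proof (rule has_real_derivative_vpow_along_solution[OF motion])
  fix xs ys :: "'n list"
  show "(\<lambda>q. L k r q xs) differentiable (at (x t))" if "length xs = r"
    using L_smooth[OF assms] xU that unfolding smooth_tensor_def by (auto intro: smooth_on_differentiable)
  show "L k r (x t) xs = L k r (x t) ys" if "length xs = r" "mset xs = mset ys"
    using L_sym[OF assms] xU that unfolding sym_tensor_def by blast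
qed

lemma has_real_derivative_comp_contr_L1:
  assumes "k \<le> n"
  shows "((\<lambda>\<tau>. contr (L k 1) Q (x \<tau>) []) has_real_derivative
     (\<Sum>i\<in>UNIV. pd (\<lambda>p. contr (L k 1) Q p []) i (x t) * v t $ i)) (at t)"
proof (rule has_real_derivative_comp_pd)
  have "smooth_tensor U 1 (L k 1)"
    using L_smooth[OF assms, of 1] m by simp
  then have "(\<lambda>p. L k 1 p [c]) differentiable (at (x t))" for c
    using xU unfolding smooth_tensor_def by (metis smooth_on_differentiable length_Cons list.size(3) One_nat_def)
  moreover have "(\<lambda>p. Q p $ c) differentiable (at (x t))" for c
    using Q_smooth xU by (rule smooth_on_differentiable)
  ultimately show "(\<lambda>p. contr (L k 1) Q p []) differentiable (at (x t))"
    unfolding contr_def by (intro differentiable_sum differentiable_mult ballI) simp_all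
  show "(x has_vector_derivative v t) (at t)"
    using motion by (simp add: motion_at_def)
qed

lemma has_real_derivative_Imn:
  "((\<lambda>\<tau>. Imn g Q C L G s m n \<tau> (x \<tau>) (v \<tau>)) has_real_derivative
     Imn_rate (\<lambda>k r. vpow (L k r) r (x t) (v t)) (\<lambda>k r. vpow (covd g (L k r)) (Suc r) (x t) (v t))
       (\<lambda>k r. vpow (contr (L k r) Q) (r - 1) (x t) (v t))
       (\<lambda>k. vpow (contr (symz (covd g (L k (m - 1)))) Q) (m - 1) (x t) (v t))
       (vpow (contr C Q) (m - 1) (x t) (v t))
       (\<lambda>k. \<Sum>i\<in>UNIV. pd (\<lambda>p. contr (L k 1) Q p []) i (x t) * v t $ i)
       (\<Sum>i\<in>UNIV. pd G i (x t) * v t $ i) s m n t) (at t)"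
proof -
  have x_deriv: "(x has_vector_derivative v t) (at t)"
    using motion by (simp add: motion_at_def)
  have Suc_m: "Suc (m - Suc 0) = m" using m by simp
  have S: "((\<lambda>\<tau>. \<Sum>k=1..n. \<tau>^k / real k * vpow (symz (covd g (L (k-1) (m-1)))) m (x \<tau>) (v \<tau>))
      has_real_derivative (\<Sum>k=1..n. t^(k-1) * vpow (covd g (L (k-1) (m-1))) (Suc (m-1)) (x t) (v t)
        - t^k / real k * real m * vpow (contr (symz (covd g (L (k-1) (m-1)))) Q) (m-1) (x t) (v t))) (at t)"
    by (intro DERIV_sum DERIV_cong[OF DERIV_mult[OF has_real_derivative_pow_div
          has_real_derivative_vpow_symz_covd_L]]) (auto simp: Suc_m vpow_symz mult_ac)
  have L: "((\<lambda>\<tau>. \<Sum>r=1..m-1. \<Sum>k=0..n. \<tau>^k * vpow (L k r) r (x \<tau>) (v \<tau>))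
      has_real_derivative (\<Sum>r=1..m-1. \<Sum>k=0..n. real k * t^(k-1) * vpow (L k r) r (x t) (v t)
        + t^k * (vpow (covd g (L k r)) (Suc r) (x t) (v t) - real r * vpow (contr (L k r) Q) (r - 1) (x t) (v t)))) (at t)"
    by (intro DERIV_sum DERIV_cong[OF DERIV_mult[OF DERIV_pow has_real_derivative_vpow_L]]) auto
  have K: "((\<lambda>\<tau>. \<Sum>k=1..n. \<tau>^k / real k * contr (L (k-1) 1) Q (x \<tau>) [])
      has_real_derivative (\<Sum>k=1..n. t^(k-1) * vpow (contr (L (k-1) 1) Q) (1 - 1) (x t) (v t)
        + t^k / real k * (\<Sum>i\<in>UNIV. pd (\<lambda>p. contr (L (k-1) 1) Q p []) i (x t) * v t $ i))) (at t)"
    by (intro DERIV_sum DERIV_cong[OF DERIV_mult[OF has_real_derivative_pow_div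
          has_real_derivative_comp_contr_L1]]) (auto simp: vpow_0)
  have s: "((\<lambda>\<tau>. s * \<tau>^(n+1) / real (n+1)) has_real_derivative s * t^n) (at t)"
    using DERIV_cmult[OF has_real_derivative_pow_div[of "n+1"], of s] by simp
  have G: "((\<lambda>\<tau>. G (x \<tau>)) has_real_derivative (\<Sum>i\<in>UNIV. pd G i (x t) * v t $ i)) (at t)"
    by (rule has_real_derivative_comp_pd[OF smooth_on_differentiable[OF G_smooth xU] x_deriv])
  show ?thesis
    unfolding Imn_expand Imn_rate_def
    using DERIV_add[OF DERIV_add[OF DERIV_add[OF DERIV_add[OF DERIV_diff[OF has_real_derivative_vpow_C S] L] s] K] G] by simp
qed

end

end

locale first_integral_hierarchy = tensor_hierarchy +
  fixes s :: real
  assumes n: "n \<ge> 1"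
    and i_b: "killing g U (m - 1) (L n (m - 1))"
    and ii: "\<And>q. q \<in> U \<Longrightarrow> contr (L n 1) Q q [] = s"
    and iii_1: "\<And>q xs. q \<in> U \<Longrightarrow> length xs = m - 1 \<Longrightarrow>
        symz (covd g (L n (m - 2))) q xs
          = - (real m / real n) * contr (symz (covd g (L (n - 1) (m - 1)))) Q q xs"
    and iii_2: "\<And>k q xs. 2 \<le> k \<Longrightarrow> k \<le> n \<Longrightarrow> q \<in> U \<Longrightarrow> length xs = m - 1 \<Longrightarrow>
        symz (covd g (L (k - 1) (m - 2))) q xs
          = - (real m / real (k - 1)) * contr (symz (covd g (L (k - 2) (m - 1)))) Q q xs
            - real k * L k (m - 1) q xs"
    and iii_3: "\<And>q xs. q \<in> U \<Longrightarrow> length xs = m - 1 \<Longrightarrow>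
        symz (covd g (L 0 (m - 2))) q xs = real m * contr C Q q xs - L 1 (m - 1) q xs"
    and iii_4: "\<And>r q xs. 2 \<le> r \<Longrightarrow> r \<le> m - 2 \<Longrightarrow> q \<in> U \<Longrightarrow> length xs = r \<Longrightarrow>
        symz (covd g (L n (r - 1))) q xs = real (r + 1) * contr (L n (r + 1)) Q q xs"
    and iii_5: "\<And>k r q xs. 1 \<le> k \<Longrightarrow> k \<le> n \<Longrightarrow> 2 \<le> r \<Longrightarrow> r \<le> m - 2 \<Longrightarrow> q \<in> U \<Longrightarrow>
        length xs = r \<Longrightarrow>
        symz (covd g (L (k - 1) (r - 1))) q xs
          = real (r + 1) * contr (L (k - 1) (r + 1)) Q q xs - real k * L k r q xs"
    and iii_6: "\<And>q i. q \<in> U \<Longrightarrow>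
        pd (\<lambda>p. contr (L (n - 1) 1) Q p []) i q = 2 * real n * contr (L n 2) Q q [i]"
    and iii_7: "\<And>k q i. 2 \<le> k \<Longrightarrow> k \<le> n \<Longrightarrow> q \<in> U \<Longrightarrow>
        pd (\<lambda>p. contr (L (k - 2) 1) Q p []) i q
          = 2 * real (k - 1) * contr (L (k - 1) 2) Q q [i] - real k * real (k - 1) * L k 1 q [i]"
    and iii_8: "\<And>q i. q \<in> U \<Longrightarrow> pd G i q = 2 * contr (L 0 2) Q q [i] - L 1 1 q [i]"
begin

context
  fixes q
  assumes q: "q \<in> U"
begin

lemma contracted_iii_1:
  "vpow (covd g (L n (m - 2))) (Suc (m - 2)) q w
     = - (real m / real n) * vpow (contr (symz (covd g (L (n - 1) (m - 1)))) Q) (m - 1) q w"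
proof -
  have "vpow (covd g (L n (m - 2))) (Suc (m - 2)) q w
      = vpow (\<lambda>p xs. - (real m / real n) * contr (symz (covd g (L (n - 1) (m - 1)))) Q p xs) (m - 1) q w"
    using m by (intro vpow_covd_eqI iii_1[OF q]) auto
  then show ?thesis by (simp only: vpow_cmult)
qed

lemma contracted_iii_2:
  assumes "2 \<le> k" "k \<le> n"
  shows "vpow (covd g (L (k - 1) (m - 2))) (Suc (m - 2)) q w
     = - (real m / real (k - 1)) * vpow (contr (symz (covd g (L (k - 2) (m - 1)))) Q) (m - 1) q w
       - real k * vpow (L k (m - 1)) (m - 1) q w"
proof -
  have "vpow (covd g (L (k - 1) (m - 2))) (Suc (m - 2)) q w
      = vpow (\<lambda>p xs. - (real m / real (k - 1)) * contr (symz (covd g (L (k - 2) (m - 1)))) Q p xs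
                      - real k * L k (m - 1) p xs) (m - 1) q w"
    using m by (intro vpow_covd_eqI iii_2[OF assms q]) auto
  then show ?thesis by (simp only: vpow_diff vpow_cmult)
qed

lemma contracted_iii_3:
  "vpow (covd g (L 0 (m - 2))) (Suc (m - 2)) q w
     = real m * vpow (contr C Q) (m - 1) q w - vpow (L 1 (m - 1)) (m - 1) q w"
proof -
  have "vpow (covd g (L 0 (m - 2))) (Suc (m - 2)) q w
      = vpow (\<lambda>p xs. real m * contr C Q p xs - L 1 (m - 1) p xs) (m - 1) q w"
    using m by (intro vpow_covd_eqI iii_3[OF q]) auto
  then show ?thesis by (simp only: vpow_diff vpow_cmult)
qed

lemma contracted_iii_4:
  assumes "2 \<le> r" "r \<le> m - 2"
  shows "vpow (covd g (L n (r - 1))) (Suc (r - 1)) q w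
     = real (r + 1) * vpow (contr (L n (r + 1)) Q) (r + 1 - 1) q w"
proof -
  have "vpow (covd g (L n (r - 1))) (Suc (r - 1)) q w
      = vpow (\<lambda>p xs. real (r + 1) * contr (L n (r + 1)) Q p xs) r q w"
    using assms by (intro vpow_covd_eqI iii_4[OF assms q]) auto
  then show ?thesis by (simp add: vpow_cmult)
qed

lemma contracted_iii_5:
  assumes "1 \<le> k" "k \<le> n" "2 \<le> r" "r \<le> m - 2"
  shows "vpow (covd g (L (k - 1) (r - 1))) (Suc (r - 1)) q w
     = real (r + 1) * vpow (contr (L (k - 1) (r + 1)) Q) (r + 1 - 1) q w - real k * vpow (L k r) r q w"
proof -
  have "vpow (covd g (L (k - 1) (r - 1))) (Suc (r - 1)) q w
      = vpow (\<lambda>p xs. real (r + 1) * contr (L (k - 1) (r + 1)) Q p xs - real k * L k r p xs) r q w"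
    using assms by (intro vpow_covd_eqI iii_5[OF assms q]) auto
  then show ?thesis by (simp add: vpow_diff vpow_cmult)
qed

lemma contracted_iii_6:
  "(\<Sum>i\<in>UNIV. pd (\<lambda>p. contr (L (n - 1) 1) Q p []) i q * w $ i)
     = 2 * real n * vpow (contr (L n 2) Q) (2 - 1) q w"
  unfolding iii_6[OF q] by (simp add: vpow_Suc_0 sum_distrib_left mult_ac)

lemma contracted_iii_7:
  assumes "2 \<le> k" "k \<le> n"
  shows "(\<Sum>i\<in>UNIV. pd (\<lambda>p. contr (L (k - 2) 1) Q p []) i q * w $ i)
     = 2 * real (k - 1) * vpow (contr (L (k - 1) 2) Q) (2 - 1) q w - real k * real (k - 1) * vpow (L k 1) 1 q w"
  unfolding iii_7[OF assms q] by (simp add: vpow_Suc_0 sum_distrib_left sum_subtractf algebra_simps)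

lemma contracted_iii_8:
  "(\<Sum>i\<in>UNIV. pd G i q * w $ i) = 2 * vpow (contr (L 0 2) Q) (2 - 1) q w - vpow (L 1 1) 1 q w"
  unfolding iii_8[OF q] by (simp add: vpow_Suc_0 sum_distrib_left sum_subtractf algebra_simps)

lemma contracted_ii: "vpow (contr (L n 1) Q) (1 - 1) q w = s"
  using ii[OF q] by (simp add: vpow_0)

lemma Imn_rate_eq_0:
  "Imn_rate (\<lambda>k r. vpow (L k r) r q w) (\<lambda>k r. vpow (covd g (L k r)) (Suc r) q w)
     (\<lambda>k r. vpow (contr (L k r) Q) (r - 1) q w)
     (\<lambda>k. vpow (contr (symz (covd g (L k (m - 1)))) Q) (m - 1) q w) (vpow (contr C Q) (m - 1) q w)
     (\<lambda>k. \<Sum>i\<in>UNIV. pd (\<lambda>p. contr (L k 1) Q p []) i q * w $ i) (\<Sum>i\<in>UNIV. pd G i q * w $ i)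
     s m n t = 0"
proof -
  have "Imn_rate_coeff (\<lambda>k r. vpow (L k r) r q w) (\<lambda>k r. vpow (covd g (L k r)) (Suc r) q w)
     (\<lambda>k r. vpow (contr (L k r) Q) (r - 1) q w)
     (\<lambda>k. vpow (contr (symz (covd g (L k (m - 1)))) Q) (m - 1) q w) (vpow (contr C Q) (m - 1) q w)
     (\<lambda>k. \<Sum>i\<in>UNIV. pd (\<lambda>p. contr (L k 1) Q p []) i q * w $ i) (\<Sum>i\<in>UNIV. pd G i q * w $ i)
     s m n k = 0" if "k \<le> n" for k
    by (rule Imn_rate_coeff_eq_0[OF m n that contracted_iii_1 contracted_iii_2 contracted_iii_3
          contracted_iii_4 contracted_iii_5 contracted_iii_6 contracted_iii_7 contracted_iii_8
          contracted_ii vpow_covd_killing[OF i_b q]])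
  then show ?thesis
    unfolding Imn_rate_eq_sum_coeff by (intro sum.neutral ballI) simp
qed

end

theorem first_integral_Imn: "first_integral g Q U (Imn g Q C L G s m n)"
proof (rule first_integralI)
  fix x v a t
  assume motion: "motion_at g Q x v a t" and xU: "x t \<in> U"
  show "((\<lambda>\<tau>. Imn g Q C L G s m n \<tau> (x \<tau>) (v \<tau>)) has_real_derivative 0) (at t)"
    using has_real_derivative_Imn[OF motion xU, where s=s] by (simp only: Imn_rate_eq_0[OF xU])
qed

end

theorem theorem1:
  fixes g :: "real^'n \<Rightarrow> real^'n^'n" and Q :: "real^'n \<Rightarrow> real^'n"
    and U :: "(real^'n) set" and C :: "'n tensor" and L :: "nat \<Rightarrow> nat \<Rightarrow> 'n tensor"
    and G :: "real^'n \<Rightarrow> real" and s :: real and m n :: nat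
  assumes U: "open U"
    and g_smooth: "\<And>a b. smooth_on U (\<lambda>q. g q $ a $ b)"
    and g_sym: "\<And>q. q \<in> U \<Longrightarrow> transpose (g q) = g q"
    and g_nondeg: "\<And>q. q \<in> U \<Longrightarrow> invertible (g q)"
    and Q_smooth: "\<And>a. smooth_on U (\<lambda>q. Q q $ a)"
    and m: "m \<ge> 3" and n: "n \<ge> 1"
    and G_smooth: "smooth_on U G"
    and C_smooth: "smooth_tensor U m C"
    and C_killing: "killing g U m C"
    and L_smooth: "\<And>k r. k \<le> n \<Longrightarrow> 1 \<le> r \<Longrightarrow> r \<le> m - 1 \<Longrightarrow> smooth_tensor U r (L k r)"
    and L_sym: "\<And>k r. k \<le> n \<Longrightarrow> 1 \<le> r \<Longrightarrow> r \<le> m - 1 \<Longrightarrow> sym_tensor U r (L k r)"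
    and i_a: "\<And>k. k < n \<Longrightarrow> killing g U m (symz (covd g (L k (m - 1))))"
    and i_b: "killing g U (m - 1) (L n (m - 1))"
    and ii: "\<And>q. q \<in> U \<Longrightarrow> contr (L n 1) Q q [] = s"
    and iii_1: "\<And>q xs. q \<in> U \<Longrightarrow> length xs = m - 1 \<Longrightarrow>
        symz (covd g (L n (m - 2))) q xs
          = - (real m / real n) * contr (symz (covd g (L (n - 1) (m - 1)))) Q q xs"
    and iii_2: "\<And>k q xs. 2 \<le> k \<Longrightarrow> k \<le> n \<Longrightarrow> q \<in> U \<Longrightarrow> length xs = m - 1 \<Longrightarrow>
        symz (covd g (L (k - 1) (m - 2))) q xs
          = - (real m / real (k - 1)) * contr (symz (covd g (L (k - 2) (m - 1)))) Q q xs
            - real k * L k (m - 1) q xs"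
    and iii_3: "\<And>q xs. q \<in> U \<Longrightarrow> length xs = m - 1 \<Longrightarrow>
        symz (covd g (L 0 (m - 2))) q xs = real m * contr C Q q xs - L 1 (m - 1) q xs"
    and iii_4: "\<And>r q xs. 2 \<le> r \<Longrightarrow> r \<le> m - 2 \<Longrightarrow> q \<in> U \<Longrightarrow> length xs = r \<Longrightarrow>
        symz (covd g (L n (r - 1))) q xs = real (r + 1) * contr (L n (r + 1)) Q q xs"
    and iii_5: "\<And>k r q xs. 1 \<le> k \<Longrightarrow> k \<le> n \<Longrightarrow> 2 \<le> r \<Longrightarrow> r \<le> m - 2 \<Longrightarrow> q \<in> U \<Longrightarrow>
        length xs = r \<Longrightarrow>
        symz (covd g (L (k - 1) (r - 1))) q xs
          = real (r + 1) * contr (L (k - 1) (r + 1)) Q q xs - real k * L k r q xs"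
    and iii_6: "\<And>q i. q \<in> U \<Longrightarrow>
        pd (\<lambda>p. contr (L (n - 1) 1) Q p []) i q = 2 * real n * contr (L n 2) Q q [i]"
    and iii_7: "\<And>k q i. 2 \<le> k \<Longrightarrow> k \<le> n \<Longrightarrow> q \<in> U \<Longrightarrow>
        pd (\<lambda>p. contr (L (k - 2) 1) Q p []) i q
          = 2 * real (k - 1) * contr (L (k - 1) 2) Q q [i] - real k * real (k - 1) * L k 1 q [i]"
    and iii_8: "\<And>q i. q \<in> U \<Longrightarrow> pd G i q = 2 * contr (L 0 2) Q q [i] - L 1 1 q [i]"
  shows "first_integral g Q U (Imn g Q C L G s m n)"
proof -
  interpret first_integral_hierarchy g Q U C L G m n s
    by (unfold_locales; fact assms)
  show ?thesis
    by (rule first_integral_Imn)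
qed

end
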